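(* Let $K$ be a field and let $I$ be a monomial ideal in $R=K[x_1,\ldots,x_n]$ such that $I=I_1R+I_2R$, where $\mathcal{G}(I_1)\subset R_1=K[x_1,\ldots,x_m]$ and $\mathcal{G}(I_2)\subset R_2=K[x_{m+1},\ldots,x_n]$ for some $m\ge 1$. If $I_1$ (in $R_1$) and $I_2$ (in $R_2$) have the copersistence property, then $I$ has the copersistence property.
   Context: $\mathcal{G}(J)$ denotes the minimal set of monomial generators of a monomial ideal $J$. An ideal $I$ in a commutative Noetherian ring $R$ has the copersistence property if $\mathrm{Ass}_R(R/I^k)\supseteq\mathrm{Ass}_R(R/I^{k+1})$ for all $k\ge 1$. *)

theory Defs
  imports Main "HOL-Library.Poly_Mapping"
begin

text \<open>Polynomials in variables x_i (i :: nat) with coefficients in 'k: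
  maps from exponent vectors (monomials) to coefficients.\<close>
type_synonym 'k mpoly = "(nat \<Rightarrow>\<^sub>0 nat) \<Rightarrow>\<^sub>0 'k"

text \<open>The polynomial ring K[x_i : i in V], as a subring of the big polynomial type.\<close>
definition polys :: "nat set \<Rightarrow> 'k::comm_ring_1 mpoly set" where
  "polys V = {p :: 'k mpoly. \<forall>t\<in>Poly_Mapping.keys p. Poly_Mapping.keys (t :: nat \<Rightarrow>\<^sub>0 nat) \<subseteq> V}"

definition monom :: "(nat \<Rightarrow>\<^sub>0 nat) \<Rightarrow> 'k::comm_ring_1 mpoly" where
  "monom t = Poly_Mapping.single t 1"

definition is_ideal :: "'a::comm_ring_1 set \<Rightarrow> 'a set \<Rightarrow> bool" where
  "is_ideal S J \<longleftrightarrow> J \<subseteq> S \<and> 0 \<in> J \<and> (\<forall>a\<in>J. \<forall>b\<in>J. a + b \<in> J)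
     \<and> (\<forall>s\<in>S. \<forall>a\<in>J. s * a \<in> J)"

text \<open>Ideal of the ring S generated by G (for G a subset of S: the extension G S).\<close>
definition ideal_gen :: "'a::comm_ring_1 set \<Rightarrow> 'a set \<Rightarrow> 'a set" where
  "ideal_gen S G = \<Inter>{J. is_ideal S J \<and> G \<subseteq> J}"

fun ideal_pow :: "'a::comm_ring_1 set \<Rightarrow> 'a set \<Rightarrow> nat \<Rightarrow> 'a set" where
  "ideal_pow S J 0 = S"
| "ideal_pow S J (Suc k) = ideal_gen S {a * b | a b. a \<in> ideal_pow S J k \<and> b \<in> J}"

definition prime_ideal :: "'a::comm_ring_1 set \<Rightarrow> 'a set \<Rightarrow> bool" where
  "prime_ideal S P \<longleftrightarrow> is_ideal S P \<and> P \<noteq> S \<and>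
     (\<forall>a\<in>S. \<forall>b\<in>S. a * b \<in> P \<longrightarrow> a \<in> P \<or> b \<in> P)"

text \<open>Ass_S(S/J): primes of S of the form (J :_S f) for some f in S.\<close>
definition Ass :: "'a::comm_ring_1 set \<Rightarrow> 'a set \<Rightarrow> 'a set set" where
  "Ass S J = {P. prime_ideal S P \<and> (\<exists>f\<in>S. P = {a\<in>S. a * f \<in> J})}"

definition copersistent :: "'a::comm_ring_1 set \<Rightarrow> 'a set \<Rightarrow> bool" where
  "copersistent S J \<longleftrightarrow> (\<forall>k\<ge>1. Ass S (ideal_pow S J (Suc k)) \<subseteq> Ass S (ideal_pow S J k))"

definition monomial_ideal :: "nat set \<Rightarrow> 'k::comm_ring_1 mpoly set \<Rightarrow> bool" where
  "monomial_ideal V J \<longleftrightarrow> (\<exists>M. M \<subseteq> {t. Poly_Mapping.keys t \<subseteq> V} \<and> J = ideal_gen (polys V) (monom ` M))"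

end

theory Submission
  imports Defs
begin

text \<open>
  A monomial ideal of K[x_i : i \<in> V] is the K-span of an up-closed set F of exponent vectors, and
  so are its powers.  Its associated primes are the primes P_A generated by variables x_i, i \<in> A,
  and P_A is associated exactly when a single monomial x^u has (F : x^u) = P_A.  Copersistence
  thereby becomes a statement about such witnesses u.

  For disjoint variable sets V1, V2, an exponent lies in the k-th power of F1 + F2 iff its
  restrictions to V1 and V2 lie in F1^i and F2^j for some i + j = k.  A witness u = u1 + u2 of P_A
  for the power k + 1 thus splits into u1, u2.  If p and q are the largest exponents with
  u1 \<in> F1^p and u2 \<in> F2^q, then p + q = k (unless A is empty, which is trivial), and when, say,
  p \<ge> 1, u1 is a witness of P_(A \<inter> V1) for F1^(p+1).  Copersistence of F1 gives a witness u1'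
  for F1^p, and u1' + u2 is a witness of P_A for the k-th power.
\<close>

type_synonym exponent = "nat \<Rightarrow>\<^sub>0 nat"

lemma poly_mapping_sum_singles:
  "(p::'a \<Rightarrow>\<^sub>0 'b::comm_monoid_add)
    = (\<Sum>t\<in>Poly_Mapping.keys p. Poly_Mapping.single t (Poly_Mapping.lookup p t))"
  by (rule poly_mapping_eqI) (simp add: lookup_sum lookup_single when_def in_keys_iff)

lemma keys_monom [simp]: "Poly_Mapping.keys (monom t :: 'k::comm_ring_1 mpoly) = {t}"
  by (simp add: monom_def)

lemma monom_mult: "(monom s :: 'k::comm_ring_1 mpoly) * monom t = monom (s + t)"
  by (simp add: monom_def mult_single)

lemma monom_0: "(monom 0 :: 'k::comm_ring_1 mpoly) = 1"
  by (simp add: monom_def)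

lemma single_0_mult_monom:
  "Poly_Mapping.single 0 c * monom t = (Poly_Mapping.single t c :: 'k::comm_ring_1 mpoly)"
  by (simp add: monom_def mult_single)

lemma keys_monom_mult:
  "Poly_Mapping.keys (monom s * (g::'k::comm_ring_1 mpoly)) = (\<lambda>t. s + t) ` Poly_Mapping.keys g"
proof -
  have shift: "Poly_Mapping.lookup (monom s * g) (s + t) = Poly_Mapping.lookup g t" for t
    by (simp add: monom_def lookup_mult lookup_single when_mult mult_when)
  have other: "Poly_Mapping.lookup (monom s * g) k = 0" if "\<forall>t. k \<noteq> s + t" for k
    using that by (simp add: monom_def lookup_mult lookup_single when_mult mult_when)
  show ?thesis
  proof (intro set_eqI iffI)
    fix k assume k: "k \<in> Poly_Mapping.keys (monom s * g)"
    then obtain t where "k = s + t"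
      using other by (force simp: in_keys_iff)
    with k show "k \<in> (\<lambda>t. s + t) ` Poly_Mapping.keys g"
      by (simp add: in_keys_iff shift)
  qed (auto simp: in_keys_iff shift)
qed

lemma lookup_mult_eq_0:
  assumes "\<forall>x\<in>Poly_Mapping.keys p. \<forall>y\<in>Poly_Mapping.keys q. x + y \<noteq> k"
  shows "Poly_Mapping.lookup (p * q) k = 0"
proof -
  have "k \<notin> Poly_Mapping.keys (p * q)"
    using assms keys_mult[of p q] by blast
  then show ?thesis
    by (simp add: in_keys_iff)
qed

lemma lookup_mult_Max:
  fixes a g :: "'k::comm_ring_1 mpoly"
  assumes a: "\<forall>x\<in>Poly_Mapping.keys a. x \<le> s" and g: "\<forall>y\<in>Poly_Mapping.keys g. y \<le> t"
  shows "Poly_Mapping.lookup (a * g) (s + t) = Poly_Mapping.lookup a s * Poly_Mapping.lookup g t"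
proof -
  define ca where "ca = Poly_Mapping.single s (Poly_Mapping.lookup a s)"
  define cg where "cg = Poly_Mapping.single t (Poly_Mapping.lookup g t)"
  define a' where "a' = a - ca"
  define g' where "g' = g - cg"
  have a': "\<forall>x\<in>Poly_Mapping.keys a'. x < s"
    using a by (auto simp: a'_def ca_def in_keys_iff lookup_minus lookup_single when_def
        order.strict_iff_order split: if_splits)
  have g': "\<forall>y\<in>Poly_Mapping.keys g'. y < t"
    using g by (auto simp: g'_def cg_def in_keys_iff lookup_minus lookup_single when_def
        order.strict_iff_order split: if_splits)
  have "a * g = ca * cg + ca * g' + a' * cg + a' * g'"
    unfolding a'_def g'_def by (simp add: algebra_simps)
  moreover have "Poly_Mapping.lookup (ca * g') (s + t) = 0"
    unfolding ca_def
    by (rule lookup_mult_eq_0) (use g' in \<open>auto dest!: add_strict_left_mono[of _ t s]\<close>)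
  moreover have "Poly_Mapping.lookup (a' * cg) (s + t) = 0"
    unfolding cg_def
    by (rule lookup_mult_eq_0) (use a' in \<open>auto dest!: add_strict_right_mono[of _ s t]\<close>)
  moreover have "Poly_Mapping.lookup (a' * g') (s + t) = 0"
    by (rule lookup_mult_eq_0) (use a' g' in \<open>fastforce dest: add_strict_mono\<close>)
  ultimately show ?thesis
    by (simp add: lookup_add ca_def cg_def mult_single)
qed

lemma is_ideal_add: "is_ideal S J \<Longrightarrow> a \<in> J \<Longrightarrow> b \<in> J \<Longrightarrow> a + b \<in> J"
  by (simp add: is_ideal_def)

lemma is_ideal_mult: "is_ideal S J \<Longrightarrow> s \<in> S \<Longrightarrow> a \<in> J \<Longrightarrow> s * a \<in> J"
  by (simp add: is_ideal_def)

lemma is_ideal_sum: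
  assumes "is_ideal S J" "finite X" "\<forall>x\<in>X. f x \<in> J"
  shows "sum f X \<in> J"
  using assms(2,3) by (induction X rule: finite_induct) (use assms(1) in \<open>simp_all add: is_ideal_def\<close>)

lemma ideal_gen_eqI:
  assumes "is_ideal S J0" "G \<subseteq> J0" "\<And>J. is_ideal S J \<Longrightarrow> G \<subseteq> J \<Longrightarrow> J0 \<subseteq> J"
  shows "ideal_gen S G = J0"
  using assms unfolding ideal_gen_def by blast

section \<open>Monomial ideals as sets of exponents\<close>

definition exps :: "nat set \<Rightarrow> exponent set" where
  "exps V = {t. Poly_Mapping.keys t \<subseteq> V}"

definition mspan :: "exponent set \<Rightarrow> 'k::comm_ring_1 mpoly set" where
  "mspan F = {p. Poly_Mapping.keys p \<subseteq> F}"

definition exp_ideal :: "nat set \<Rightarrow> exponent set \<Rightarrow> bool" where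
  "exp_ideal V F \<longleftrightarrow> F \<subseteq> exps V \<and> (\<forall>t\<in>F. \<forall>r\<in>exps V. t + r \<in> F)"

definition exp_ideal_gen :: "nat set \<Rightarrow> exponent set \<Rightarrow> exponent set" where
  "exp_ideal_gen V M = {s + r | s r. s \<in> M \<and> r \<in> exps V}"

lemma exps_0 [simp]: "0 \<in> exps V"
  by (simp add: exps_def)

lemma exps_add: "s \<in> exps V \<Longrightarrow> t \<in> exps V \<Longrightarrow> s + t \<in> exps V"
  using keys_add[of s t] by (auto simp: exps_def)

lemma exps_sum: "finite X \<Longrightarrow> \<forall>x\<in>X. W x \<in> exps V \<Longrightarrow> sum W X \<in> exps V"
  by (induction X rule: finite_induct) (simp_all add: exps_add)

lemma exps_mono: "X \<subseteq> Y \<Longrightarrow> exps X \<subseteq> exps Y"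
  unfolding exps_def by blast

lemma single_in_exps: "i \<in> V \<Longrightarrow> Poly_Mapping.single i (1::nat) \<in> exps V"
  by (simp add: exps_def)

lemma polys_eq_mspan: "polys V = mspan (exps V)"
  by (auto simp: polys_def mspan_def exps_def)

lemma mspan_0 [simp]: "0 \<in> mspan F"
  by (simp add: mspan_def)

lemma mspan_add: "p \<in> mspan F \<Longrightarrow> q \<in> mspan F \<Longrightarrow> p + q \<in> mspan F"
  using keys_add[of p q] by (auto simp: mspan_def)

lemma mspan_diff: "p \<in> mspan F \<Longrightarrow> q \<in> mspan F \<Longrightarrow> p - q \<in> mspan F"
  using mspan_add[of p F "- q"] by (simp add: mspan_def keys_minus)

lemma mspan_mono: "F \<subseteq> G \<Longrightarrow> mspan F \<subseteq> mspan G"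
  unfolding mspan_def by blast

lemma monom_in_mspan [simp]: "(monom t :: 'k::comm_ring_1 mpoly) \<in> mspan F \<longleftrightarrow> t \<in> F"
  by (simp add: mspan_def)

lemma mspan_mult:
  assumes "\<forall>r\<in>Poly_Mapping.keys p. \<forall>t\<in>F. r + t \<in> F" and "q \<in> mspan F"
  shows "p * q \<in> mspan F"
proof -
  have "Poly_Mapping.keys (p * q) \<subseteq> {r + t | r t. r \<in> Poly_Mapping.keys p \<and> t \<in> Poly_Mapping.keys q}"
    by (rule keys_mult)
  also have "\<dots> \<subseteq> F"
    using assms by (auto simp: mspan_def)
  finally show ?thesis
    by (simp add: mspan_def)
qed

lemma exp_ideal_mult:
  assumes "exp_ideal V F" "p \<in> polys V" "q \<in> mspan F"
  shows "p * q \<in> mspan F"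
proof (rule mspan_mult[OF _ assms(3)])
  show "\<forall>r\<in>Poly_Mapping.keys p. \<forall>t\<in>F. r + t \<in> F"
    using assms(1,2) by (auto simp: exp_ideal_def polys_eq_mspan mspan_def) (metis add.commute subsetD)
qed

lemma exp_ideal_exps: "exp_ideal V (exps V)"
  by (simp add: exp_ideal_def exps_add)

lemma exp_ideal_gen_exp_ideal:
  assumes "M \<subseteq> exps V"
  shows "exp_ideal V (exp_ideal_gen V M)"
  unfolding exp_ideal_def
proof (intro conjI ballI subsetI)
  fix t assume "t \<in> exp_ideal_gen V M"
  then show "t \<in> exps V"
    using assms by (auto simp: exp_ideal_gen_def intro: exps_add)
next
  fix t r' assume "t \<in> exp_ideal_gen V M" "r' \<in> exps V"
  then obtain s r where "t + r' = s + (r + r')" "s \<in> M" "r + r' \<in> exps V"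
    unfolding exp_ideal_gen_def by (auto simp: add.assoc exps_add)
  then show "t + r' \<in> exp_ideal_gen V M"
    unfolding exp_ideal_gen_def by blast
qed

lemma exp_ideal_gen_superset: "M \<subseteq> exp_ideal_gen V M"
proof
  fix t assume "t \<in> M"
  then have "\<exists>s r. t = s + r \<and> s \<in> M \<and> r \<in> exps V"
    using exps_0 add_0_right by metis
  then show "t \<in> exp_ideal_gen V M"
    by (simp add: exp_ideal_gen_def)
qed

lemma exp_ideal_gen_eq: "exp_ideal V F \<Longrightarrow> exp_ideal_gen V F = F"
  using exp_ideal_gen_superset[of F V] by (auto simp: exp_ideal_def exp_ideal_gen_def)

lemma polys_mult: "p \<in> polys V \<Longrightarrow> q \<in> polys V \<Longrightarrow> p * q \<in> polys V"
  using exp_ideal_mult[OF exp_ideal_exps] by (simp add: polys_eq_mspan)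


lemma monom_in_polys: "t \<in> exps V \<Longrightarrow> monom t \<in> polys V"
  by (simp add: polys_eq_mspan)

lemma const_in_polys [simp]: "Poly_Mapping.single 0 c \<in> polys V"
  unfolding polys_def by simp

lemma one_in_polys [simp]: "1 \<in> polys V"
  using const_in_polys[of 1] by simp

lemma polys_power: "p \<in> polys V \<Longrightarrow> p ^ n \<in> polys V"
  by (induction n) (simp_all add: polys_mult)

lemma is_ideal_mspan:
  assumes "exp_ideal V F"
  shows "is_ideal (polys V) (mspan F)"
  unfolding is_ideal_def
proof (intro conjI ballI)
  show "mspan F \<subseteq> polys V"
    using assms by (auto simp: exp_ideal_def polys_eq_mspan mspan_def)
qed (simp_all add: mspan_add exp_ideal_mult[OF assms])

lemma is_ideal_diff:
  assumes "is_ideal (polys V) J" "a \<in> J" "b \<in> J"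
  shows "a - (b :: 'k::comm_ring_1 mpoly) \<in> J"
proof -
  have "Poly_Mapping.single 0 (- 1) * b \<in> J"
    using assms by (intro is_ideal_mult) auto
  then have "- b \<in> J"
    by (simp add: single_uminus)
  then show ?thesis
    using is_ideal_add[OF assms(1,2)] by (metis diff_conv_add_uminus)
qed

lemma prime_ideal_one_notin:
  assumes "prime_ideal S P" "1 \<in> S"
  shows "1 \<notin> P"
proof
  assume "1 \<in> P"
  then have "S \<subseteq> P"
    using assms(1) unfolding prime_ideal_def is_ideal_def by (metis mult.right_neutral subsetI)
  then show False
    using assms(1) unfolding prime_ideal_def is_ideal_def by blast
qed

lemma prime_ideal_power:
  assumes P: "prime_ideal (polys V) P" and x: "x \<in> polys V" and xN: "x ^ N \<in> P"
  shows "x \<in> P"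
  using xN
proof (induction N)
  case 0
  then show ?case
    using prime_ideal_one_notin[OF P one_in_polys] by simp
next
  case (Suc N)
  then show ?case
    using P x polys_power[OF x, of N] unfolding prime_ideal_def by auto
qed

lemma mspan_subset_ideal:
  fixes J :: "'k::comm_ring_1 mpoly set"
  assumes J: "is_ideal (polys V) J" and F: "F \<subseteq> exps V" and monoms: "\<forall>t\<in>F. monom t \<in> J"
  shows "mspan F \<subseteq> J"
proof
  fix p :: "'k mpoly" assume p: "p \<in> mspan F"
  have "(\<Sum>t\<in>Poly_Mapping.keys p. Poly_Mapping.single 0 (Poly_Mapping.lookup p t) * monom t) \<in> J"
    using p F monoms by (intro is_ideal_sum[OF J] ballI is_ideal_mult[OF J]) (auto simp: mspan_def)
  then show "p \<in> J"
    by (subst poly_mapping_sum_singles) (simp add: single_0_mult_monom)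
qed

lemma ideal_gen_mspan:
  assumes M: "M \<subseteq> exps V" and "monom ` M \<subseteq> G" and "G \<subseteq> mspan (exp_ideal_gen V M)"
  shows "ideal_gen (polys V) G = (mspan (exp_ideal_gen V M) :: 'k::comm_ring_1 mpoly set)"
proof (rule ideal_gen_eqI)
  show "is_ideal (polys V) (mspan (exp_ideal_gen V M) :: 'k mpoly set)"
    by (rule is_ideal_mspan[OF exp_ideal_gen_exp_ideal[OF M]])
  fix J :: "'k mpoly set" assume J: "is_ideal (polys V) J" "G \<subseteq> J"
  show "mspan (exp_ideal_gen V M) \<subseteq> J"
  proof (rule mspan_subset_ideal[OF J(1)])
    show "exp_ideal_gen V M \<subseteq> exps V"
      using exp_ideal_gen_exp_ideal[OF M] by (simp add: exp_ideal_def)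
    show "\<forall>t\<in>exp_ideal_gen V M. monom t \<in> J"
    proof
      fix t assume "t \<in> exp_ideal_gen V M"
      then obtain s r where t: "t = s + r" "s \<in> M" "r \<in> exps V"
        unfolding exp_ideal_gen_def by blast
      then have "monom r * monom s \<in> J"
        using assms J by (intro is_ideal_mult[OF J(1)] monom_in_polys) auto
      then show "monom t \<in> J"
        by (simp add: monom_mult t add.commute)
    qed
  qed
qed (use assms in simp)

lemma monomial_ideal_eq_mspan:
  assumes "monomial_ideal V (J :: 'k::comm_ring_1 mpoly set)"
  obtains F where "exp_ideal V F" "J = mspan F"
proof -
  obtain M where M: "M \<subseteq> exps V" and J: "J = ideal_gen (polys V) (monom ` M)"
    using assms unfolding monomial_ideal_def exps_def by blast
  have "J = mspan (exp_ideal_gen V M)"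
    unfolding J using exp_ideal_gen_superset[of M V] by (intro ideal_gen_mspan[OF M]) auto
  then show ?thesis
    using that exp_ideal_gen_exp_ideal[OF M] by blast
qed

lemma exp_ideal_Un_subset_exps:
  assumes "exp_ideal V1 F1" "exp_ideal V2 F2" "V1 \<subseteq> V" "V2 \<subseteq> V"
  shows "F1 \<union> F2 \<subseteq> exps V"
  using assms exps_mono[of V1 V] exps_mono[of V2 V] by (auto simp: exp_ideal_def)

lemma exp_ideal_gen_Un:
  assumes "exp_ideal V1 F1" "exp_ideal V2 F2" "V1 \<subseteq> V" "V2 \<subseteq> V"
  shows "exp_ideal V (exp_ideal_gen V (F1 \<union> F2))"
  using exp_ideal_Un_subset_exps[OF assms] by (rule exp_ideal_gen_exp_ideal)

lemma ideal_gen_mspan_Un: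
  assumes "exp_ideal V1 F1" "exp_ideal V2 F2" "V1 \<subseteq> V" "V2 \<subseteq> V"
  shows "ideal_gen (polys V) (mspan F1 \<union> mspan F2 :: 'k::comm_ring_1 mpoly set)
    = mspan (exp_ideal_gen V (F1 \<union> F2))"
proof (rule ideal_gen_mspan)
  show "F1 \<union> F2 \<subseteq> exps V"
    using assms by (rule exp_ideal_Un_subset_exps)
  have "mspan F1 \<union> mspan F2 \<subseteq> (mspan (F1 \<union> F2) :: 'k mpoly set)"
    by (auto simp: mspan_def)
  also have "\<dots> \<subseteq> mspan (exp_ideal_gen V (F1 \<union> F2))"
    by (rule mspan_mono[OF exp_ideal_gen_superset])
  finally show "mspan F1 \<union> mspan F2 \<subseteq> (mspan (exp_ideal_gen V (F1 \<union> F2)) :: 'k mpoly set)" .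
  show "monom ` (F1 \<union> F2) \<subseteq> (mspan F1 \<union> mspan F2 :: 'k mpoly set)"
    by auto
qed

section \<open>Powers\<close>

fun exp_pow :: "nat set \<Rightarrow> exponent set \<Rightarrow> nat \<Rightarrow> exponent set" where
  "exp_pow V F 0 = exps V"
| "exp_pow V F (Suc k) = {a + b | a b. a \<in> exp_pow V F k \<and> b \<in> F}"

lemma exp_pow_SucI: "a \<in> exp_pow V F k \<Longrightarrow> b \<in> F \<Longrightarrow> a + b \<in> exp_pow V F (Suc k)"
  by auto

lemma exp_pow_empty: "a \<in> exp_pow V {} k \<Longrightarrow> k = 0"
  by (cases k) auto

lemma exp_ideal_exp_pow:
  assumes F: "exp_ideal V F"
  shows "exp_ideal V (exp_pow V F k)"
proof (induction k)
  case 0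
  show ?case
    by (simp add: exp_ideal_exps)
next
  case (Suc k)
  show ?case
    unfolding exp_ideal_def
  proof (intro conjI ballI subsetI)
    fix t assume "t \<in> exp_pow V F (Suc k)"
    then obtain a b where "t = a + b" "a \<in> exp_pow V F k" "b \<in> F"
      by auto
    then show "t \<in> exps V"
      using Suc F unfolding exp_ideal_def by (blast intro: exps_add)
  next
    fix t r assume "t \<in> exp_pow V F (Suc k)" "r \<in> exps V"
    then obtain a b where t: "t = a + b" "a \<in> exp_pow V F k" "b \<in> F"
      by auto
    have "a + r \<in> exp_pow V F k"
      using Suc t(2) \<open>r \<in> exps V\<close> unfolding exp_ideal_def by blast
    then have "(a + r) + b \<in> exp_pow V F (Suc k)"
      using t(3) by (rule exp_pow_SucI)
    then show "t + r \<in> exp_pow V F (Suc k)"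
      by (simp add: t(1) ac_simps)
  qed
qed

lemma exp_pow_subset_exps: "exp_ideal V F \<Longrightarrow> exp_pow V F k \<subseteq> exps V"
  using exp_ideal_exp_pow unfolding exp_ideal_def by blast

lemma exp_pow_add_exps: "exp_ideal V F \<Longrightarrow> a \<in> exp_pow V F k \<Longrightarrow> r \<in> exps V \<Longrightarrow> a + r \<in> exp_pow V F k"
  using exp_ideal_exp_pow unfolding exp_ideal_def by blast

lemma exp_pow_add:
  assumes F: "exp_ideal V F" and a: "a \<in> exp_pow V F i"
  shows "b \<in> exp_pow V F j \<Longrightarrow> a + b \<in> exp_pow V F (i + j)"
proof (induction j arbitrary: b)
  case 0
  then show ?case
    using exp_pow_add_exps[OF F a] by simp
next
  case (Suc j)
  then obtain b' g where b: "b = b' + g" "b' \<in> exp_pow V F j" "g \<in> F"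
    by auto
  have "(a + b') + g \<in> exp_pow V F (Suc (i + j))"
    using Suc.IH[OF b(2)] b(3) by (rule exp_pow_SucI)
  then show ?case
    by (simp add: b(1) add.assoc)
qed

lemma exp_pow_Suc_subset:
  assumes F: "exp_ideal V F"
  shows "exp_pow V F (Suc k) \<subseteq> exp_pow V F k"
proof
  fix t assume "t \<in> exp_pow V F (Suc k)"
  then obtain a b where "t = a + b" "a \<in> exp_pow V F k" "b \<in> F"
    by auto
  then show "t \<in> exp_pow V F k"
    using F exp_pow_add_exps[OF F] by (auto simp: exp_ideal_def)
qed

lemma exp_pow_antimono:
  assumes F: "exp_ideal V F" and "i \<le> j"
  shows "exp_pow V F j \<subseteq> exp_pow V F i"
  using assms(2)
proof (induction j)
  case (Suc j)
  then show ?case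
    using exp_pow_Suc_subset[OF F, of j] by (cases "i = Suc j") auto
qed simp

lemma exp_pow_mono:
  assumes "V' \<subseteq> V" "F \<subseteq> G"
  shows "exp_pow V' F k \<subseteq> exp_pow V G k"
proof (induction k)
  case 0
  then show ?case
    by (simp add: exps_mono assms(1))
next
  case (Suc k)
  show ?case
  proof
    fix t assume "t \<in> exp_pow V' F (Suc k)"
    then obtain a b where "t = a + b" "a \<in> exp_pow V' F k" "b \<in> F"
      by auto
    then show "t \<in> exp_pow V G (Suc k)"
      using Suc assms(2) exp_pow_SucI by blast
  qed
qed

lemma exp_pow_nonempty:
  assumes "F \<noteq> {}"
  shows "exp_pow V F k \<noteq> {}"
proof (induction k)
  case 0
  show ?case
    by (metis empty_iff exps_0 exp_pow.simps(1))
next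
  case (Suc k)
  then obtain a b where "a \<in> exp_pow V F k" "b \<in> F"
    using assms by blast
  then show ?case
    using exp_pow_SucI by blast
qed

lemma ideal_pow_mspan:
  assumes F: "exp_ideal V F"
  shows "ideal_pow (polys V) (mspan F :: 'k::comm_ring_1 mpoly set) k = mspan (exp_pow V F k)"
proof (induction k)
  case 0
  show ?case
    by (simp add: polys_eq_mspan)
next
  case (Suc k)
  let ?G = "{a * b | a b. a \<in> (mspan (exp_pow V F k) :: 'k mpoly set) \<and> b \<in> mspan F}"
  have "ideal_gen (polys V) ?G = mspan (exp_ideal_gen V (exp_pow V F (Suc k)))"
  proof (rule ideal_gen_mspan)
    show "exp_pow V F (Suc k) \<subseteq> exps V"
      by (rule exp_pow_subset_exps[OF F])
    show "monom ` exp_pow V F (Suc k) \<subseteq> ?G"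
    proof
      fix p :: "'k mpoly" assume "p \<in> monom ` exp_pow V F (Suc k)"
      then obtain a b where "p = monom a * monom b" "a \<in> exp_pow V F k" "b \<in> F"
        by (auto simp: monom_mult)
      then show "p \<in> ?G"
        using monom_in_mspan by blast
    qed
    show "?G \<subseteq> mspan (exp_ideal_gen V (exp_pow V F (Suc k)))"
    proof clarify
      fix a b :: "'k mpoly" assume "a \<in> mspan (exp_pow V F k)" "b \<in> mspan F"
      then have "{x + y | x y. x \<in> Poly_Mapping.keys a \<and> y \<in> Poly_Mapping.keys b} \<subseteq> exp_pow V F (Suc k)"
        by (auto simp: mspan_def)
      then have "a * b \<in> mspan (exp_pow V F (Suc k))"
        using keys_mult[of a b] by (auto simp: mspan_def)
      then show "a * b \<in> mspan (exp_ideal_gen V (exp_pow V F (Suc k)))"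
        using mspan_mono[OF exp_ideal_gen_superset] by blast
    qed
  qed
  then show ?case
    by (simp only: ideal_pow.simps Suc.IH exp_ideal_gen_eq[OF exp_ideal_exp_pow[OF F]])
qed

lemma single_add_minus:
  "0 < Poly_Mapping.lookup b i \<Longrightarrow> b = Poly_Mapping.single i 1 + (b - Poly_Mapping.single i (1::nat))"
  by (rule poly_mapping_eqI) (auto simp: lookup_add lookup_minus lookup_single when_def)

lemma exps_minus: "b \<in> exps V \<Longrightarrow> b - (c :: exponent) \<in> exps V"
  by (auto simp: exps_def in_keys_iff lookup_minus)

lemma exp_pow_drop_var:
  assumes F: "exp_ideal V F" and u: "u \<in> exps V"
    and h: "Poly_Mapping.single i 1 + u \<in> exp_pow V F (Suc q)"
  shows "u \<in> exp_pow V F q"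
  using u h
proof (induction q arbitrary: u)
  case (Suc q)
  let ?e = "Poly_Mapping.single i (1::nat)"
  obtain a b where ab: "?e + u = a + b" "a \<in> exp_pow V F (Suc q)" "b \<in> F"
    using Suc.prems(2) by auto
  have bV: "b \<in> exps V"
    using ab(3) F unfolding exp_ideal_def by blast
  have "Poly_Mapping.lookup a i + Poly_Mapping.lookup b i = Suc (Poly_Mapping.lookup u i)"
    using arg_cong[OF ab(1), of "\<lambda>t. Poly_Mapping.lookup t i"] by (simp add: lookup_add)
  then consider "0 < Poly_Mapping.lookup b i" | "0 < Poly_Mapping.lookup a i"
    by linarith
  then show ?case
  proof cases
    case 1
    define b' where "b' = b - ?e"
    have "b = ?e + b'"
      unfolding b'_def using 1 by (rule single_add_minus)
    then have "?e + u = ?e + (a + b')"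
      using ab(1) by (simp add: ac_simps)
    then have "u = a + b'"
      by (rule add_left_imp_eq)
    then show ?thesis
      using exp_pow_Suc_subset[OF F] ab(2) exp_pow_add_exps[OF F _ exps_minus[OF bV]]
      unfolding b'_def by blast
  next
    case 2
    define a' where "a' = a - ?e"
    have a: "a = ?e + a'"
      unfolding a'_def using 2 by (rule single_add_minus)
    then have "?e + u = ?e + (a' + b)"
      using ab(1) by (simp add: ac_simps)
    then have u: "u = a' + b"
      by (rule add_left_imp_eq)
    have "a' \<in> exps V"
      using ab(2) exp_pow_subset_exps[OF F] exps_minus unfolding a'_def by blast
    then have "a' \<in> exp_pow V F q"
      using Suc.IH ab(2) a by simp
    then show ?thesis
      using u ab(3) exp_pow_SucI by simp
  qed
qed simp

definition exp_restrict :: "nat set \<Rightarrow> exponent \<Rightarrow> exponent" where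
  "exp_restrict X t = Poly_Mapping.mapp (\<lambda>i c. if i \<in> X then c else 0) t"

lemma lookup_exp_restrict:
  "Poly_Mapping.lookup (exp_restrict X t) i = (if i \<in> X then Poly_Mapping.lookup t i else 0)"
  by (auto simp: exp_restrict_def lookup_mapp when_def in_keys_iff)

lemma exp_restrict_add: "exp_restrict X (a + b) = exp_restrict X a + exp_restrict X b"
  by (rule poly_mapping_eqI) (simp add: lookup_exp_restrict lookup_add)

lemma exp_restrict_in_exps [simp]: "exp_restrict X t \<in> exps X"
  unfolding exps_def by (auto simp: in_keys_iff lookup_exp_restrict split: if_splits)

lemma exp_restrict_id: "t \<in> exps X \<Longrightarrow> exp_restrict X t = t"
  by (rule poly_mapping_eqI) (auto simp: lookup_exp_restrict exps_def in_keys_iff)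

lemma exp_restrict_disjoint: "t \<in> exps Y \<Longrightarrow> X \<inter> Y = {} \<Longrightarrow> exp_restrict X t = 0"
  by (rule poly_mapping_eqI) (auto simp: lookup_exp_restrict exps_def in_keys_iff)

lemma exp_restrict_split: "t \<in> exps (X \<union> Y) \<Longrightarrow> X \<inter> Y = {} \<Longrightarrow> t = exp_restrict X t + exp_restrict Y t"
  by (rule poly_mapping_eqI) (auto simp: lookup_exp_restrict lookup_add exps_def in_keys_iff)

lemma exp_restrict_pow_step:
  assumes F1: "exp_ideal V1 F1" and F2: "exp_ideal V2 F2" and s: "s \<in> F1"
    and a1: "exp_restrict V1 a \<in> exp_pow V1 F1 i" and a2: "exp_restrict V2 a \<in> exp_pow V2 F2 j"
  shows "exp_restrict V1 (a + s + r) \<in> exp_pow V1 F1 (Suc i) \<and> exp_restrict V2 (a + s + r) \<in> exp_pow V2 F2 j"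
proof
  have "s \<in> exps V1"
    using F1 s by (auto simp: exp_ideal_def)
  then have "exp_restrict V1 (a + s + r) = (exp_restrict V1 a + s) + exp_restrict V1 r"
    by (simp add: exp_restrict_add exp_restrict_id)
  then show "exp_restrict V1 (a + s + r) \<in> exp_pow V1 F1 (Suc i)"
    using exp_pow_add_exps[OF F1 exp_pow_SucI[OF a1 s]] by simp
  have "exp_restrict V2 (a + s + r) = exp_restrict V2 a + exp_restrict V2 (s + r)"
    by (simp add: exp_restrict_add add.assoc)
  then show "exp_restrict V2 (a + s + r) \<in> exp_pow V2 F2 j"
    using exp_pow_add_exps[OF F2 a2] by simp
qed

lemma exp_pow_gen_Un_restrict:
  assumes F1: "exp_ideal V1 F1" and F2: "exp_ideal V2 F2"
  shows "t \<in> exp_pow V (exp_ideal_gen V (F1 \<union> F2)) k \<Longrightarrow>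
    \<exists>i j. i + j = k \<and> exp_restrict V1 t \<in> exp_pow V1 F1 i \<and> exp_restrict V2 t \<in> exp_pow V2 F2 j"
proof (induction k arbitrary: t)
  case (Suc k)
  then obtain a s r where t: "t = a + s + r" "a \<in> exp_pow V (exp_ideal_gen V (F1 \<union> F2)) k" "s \<in> F1 \<union> F2"
    by (auto simp: exp_ideal_gen_def add.assoc)
  then obtain i j where ij: "i + j = k"
      "exp_restrict V1 a \<in> exp_pow V1 F1 i" "exp_restrict V2 a \<in> exp_pow V2 F2 j"
    using Suc.IH by blast
  show ?case
  proof (cases "s \<in> F1")
    case True
    then show ?thesis
      using exp_restrict_pow_step[OF F1 F2 True ij(2,3)] ij(1) t(1)
      by (intro exI[of _ "Suc i"] exI[of _ j]) auto
  next
    case False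
    then have "s \<in> F2"
      using t(3) by blast
    then show ?thesis
      using exp_restrict_pow_step[OF F2 F1 _ ij(3,2)] ij(1) t(1)
      by (intro exI[of _ i] exI[of _ "Suc j"]) auto
  qed
qed auto

lemma exp_pow_gen_Un_add:
  assumes V: "V1 \<subseteq> V" "V2 \<subseteq> V" and F1: "exp_ideal V1 F1" and F2: "exp_ideal V2 F2"
    and a1: "a1 \<in> exp_pow V1 F1 i" and a2: "a2 \<in> exp_pow V2 F2 j"
  shows "a1 + a2 \<in> exp_pow V (exp_ideal_gen V (F1 \<union> F2)) (i + j)"
proof -
  let ?G = "exp_ideal_gen V (F1 \<union> F2)"
  have G: "exp_ideal V ?G"
    using F1 F2 V by (rule exp_ideal_gen_Un)
  have "F1 \<subseteq> ?G" "F2 \<subseteq> ?G"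
    using exp_ideal_gen_superset[of "F1 \<union> F2" V] by auto
  then have "a1 \<in> exp_pow V ?G i" "a2 \<in> exp_pow V ?G j"
    using subsetD[OF exp_pow_mono[OF V(1)] a1] subsetD[OF exp_pow_mono[OF V(2)] a2] by simp_all
  then show ?thesis
    by (rule exp_pow_add[OF G])
qed

lemma exp_pow_gen_Un_iff:
  assumes V: "V = V1 \<union> V2" "V1 \<inter> V2 = {}" and F1: "exp_ideal V1 F1" and F2: "exp_ideal V2 F2"
    and t: "t \<in> exps V"
  shows "t \<in> exp_pow V (exp_ideal_gen V (F1 \<union> F2)) k \<longleftrightarrow>
    (\<exists>i j. i + j = k \<and> exp_restrict V1 t \<in> exp_pow V1 F1 i \<and> exp_restrict V2 t \<in> exp_pow V2 F2 j)"
proof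
  assume "\<exists>i j. i + j = k \<and> exp_restrict V1 t \<in> exp_pow V1 F1 i \<and> exp_restrict V2 t \<in> exp_pow V2 F2 j"
  then obtain i j where ij: "i + j = k"
      "exp_restrict V1 t \<in> exp_pow V1 F1 i" "exp_restrict V2 t \<in> exp_pow V2 F2 j"
    by blast
  have "V1 \<subseteq> V" "V2 \<subseteq> V"
    using V(1) by auto
  from exp_pow_gen_Un_add[OF this F1 F2 ij(2,3)]
  have "exp_restrict V1 t + exp_restrict V2 t \<in> exp_pow V (exp_ideal_gen V (F1 \<union> F2)) k"
    by (simp only: ij(1))
  then show "t \<in> exp_pow V (exp_ideal_gen V (F1 \<union> F2)) k"
    using exp_restrict_split[of t V1 V2] t V by simp
qed (rule exp_pow_gen_Un_restrict[OF F1 F2])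

section \<open>Associated primes of monomial ideals\<close>

definition meets :: "nat set \<Rightarrow> exponent set" where
  "meets A = {t. \<exists>i\<in>A. 0 < Poly_Mapping.lookup t i}"

definition var_prime :: "nat set \<Rightarrow> nat set \<Rightarrow> 'k::comm_ring_1 mpoly set" where
  "var_prime V A = mspan (exps V \<inter> meets A)"

(* u witnesses that (mspan F : x^u) is the prime generated by the variables x_i, i \<in> A. *)
definition ass_witness :: "nat set \<Rightarrow> exponent set \<Rightarrow> nat set \<Rightarrow> exponent \<Rightarrow> bool" where
  "ass_witness V F A u \<longleftrightarrow> u \<in> exps V \<and> (\<forall>w\<in>exps V. w + u \<in> F \<longleftrightarrow> w \<in> meets A)"

lemma meets_add [simp]: "s + t \<in> meets A \<longleftrightarrow> s \<in> meets A \<or> t \<in> meets A"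
  unfolding meets_def by (auto simp: lookup_add)

lemma zero_not_meets [simp]: "0 \<notin> meets A"
  unfolding meets_def by simp

lemma not_meets_empty [simp]: "t \<notin> meets {}"
  unfolding meets_def by simp

lemma single_meets: "i \<in> A \<Longrightarrow> Poly_Mapping.single i 1 \<in> meets A"
  unfolding meets_def by force

lemma exp_ideal_meets: "exp_ideal V (exps V \<inter> meets A)"
  unfolding exp_ideal_def using exps_add by auto

definition drop_terms :: "exponent set \<Rightarrow> 'k::comm_ring_1 mpoly \<Rightarrow> 'k mpoly" where
  "drop_terms X p = Poly_Mapping.mapp (\<lambda>t c. if t \<in> X then 0 else c) p"

lemma keys_drop_terms: "Poly_Mapping.keys (drop_terms X p) = Poly_Mapping.keys p - X"
  by (auto simp: drop_terms_def lookup_mapp when_def in_keys_iff)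

lemma diff_drop_terms_in_mspan: "p - drop_terms X p \<in> mspan X"
  unfolding mspan_def
  by (auto simp: drop_terms_def lookup_mapp when_def in_keys_iff lookup_minus split: if_splits)

lemma prime_var_prime: "prime_ideal (polys V) (var_prime V A :: 'k::idom mpoly set)"
  unfolding prime_ideal_def var_prime_def
proof (intro conjI ballI impI)
  show "is_ideal (polys V) (mspan (exps V \<inter> meets A) :: 'k mpoly set)"
    by (rule is_ideal_mspan[OF exp_ideal_meets])
  show "mspan (exps V \<inter> meets A) \<noteq> (polys V :: 'k mpoly set)"
  proof -
    have "(1 :: 'k mpoly) \<notin> mspan (exps V \<inter> meets A)"
      by (simp add: mspan_def)
    then show ?thesis
      using one_in_polys[of V] by blast
  qed
  let ?Q = "mspan (meets A) :: 'k mpoly set"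
  have Q_mult: "p * q \<in> ?Q" if "q \<in> ?Q" for p q :: "'k mpoly"
    using that by (intro mspan_mult) auto
  fix a b :: "'k mpoly"
  assume a: "a \<in> polys V" and b: "b \<in> polys V" and ab: "a * b \<in> mspan (exps V \<inter> meets A)"
  define a0 where "a0 = drop_terms (meets A) a"
  define b0 where "b0 = drop_terms (meets A) b"
  have a1: "a - a0 \<in> ?Q" and b1: "b - b0 \<in> ?Q"
    unfolding a0_def b0_def by (rule diff_drop_terms_in_mspan)+
  have "a0 * b0 = a * b - (a0 * (b - b0) + b * (a - a0))"
    by (simp add: algebra_simps)
  also have "\<dots> \<in> ?Q"
    using ab mspan_mono[of "exps V \<inter> meets A" "meets A"] Q_mult[OF a1] Q_mult[OF b1]
    by (intro mspan_diff mspan_add) auto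
  finally have "Poly_Mapping.keys (a0 * b0) \<subseteq> meets A"
    by (simp add: mspan_def)
  moreover have "Poly_Mapping.keys (a0 * b0) \<inter> meets A = {}"
    using keys_mult[of a0 b0] unfolding a0_def b0_def keys_drop_terms by auto
  ultimately have "Poly_Mapping.keys (a0 * b0) = {}"
    by blast
  then have "a0 = 0 \<or> b0 = 0"
    by simp
  then have "a \<in> ?Q \<or> b \<in> ?Q"
    using a1 b1 by auto
  then show "a \<in> mspan (exps V \<inter> meets A) \<or> b \<in> mspan (exps V \<inter> meets A)"
    using a b by (auto simp: mspan_def polys_eq_mspan)
qed

lemma var_prime_eq_colon:
  assumes "ass_witness V F A u"
  shows "var_prime V A = {a \<in> polys V. a * monom u \<in> (mspan F :: 'k::comm_ring_1 mpoly set)}"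
proof -
  have "a * monom u \<in> mspan F \<longleftrightarrow> Poly_Mapping.keys a \<subseteq> meets A" if "a \<in> polys V" for a :: "'k mpoly"
  proof -
    have "Poly_Mapping.keys (a * monom u) = (\<lambda>t. u + t) ` Poly_Mapping.keys a"
      by (simp add: mult.commute[of a] keys_monom_mult)
    then have "a * monom u \<in> mspan F \<longleftrightarrow> (\<forall>t\<in>Poly_Mapping.keys a. t + u \<in> F)"
      by (simp add: mspan_def image_subset_iff add.commute)
    also have "\<dots> \<longleftrightarrow> Poly_Mapping.keys a \<subseteq> meets A"
      using that assms by (auto simp: ass_witness_def polys_eq_mspan mspan_def)
    finally show ?thesis .
  qed
  then show ?thesis
    by (auto simp: var_prime_def mspan_def polys_eq_mspan)
qed

lemma var_prime_in_Ass:
  assumes "ass_witness V F A u"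
  shows "var_prime V A \<in> Ass (polys V) (mspan F :: 'k::idom mpoly set)"
proof -
  have "monom u \<in> polys V"
    using assms by (simp add: ass_witness_def monom_in_polys)
  then show ?thesis
    unfolding Ass_def using prime_var_prime var_prime_eq_colon[OF assms] by (intro CollectI conjI bexI)
qed

lemma var_prime_inj:
  assumes "A \<subseteq> V" "B \<subseteq> V" and "var_prime V A = (var_prime V B :: 'k::comm_ring_1 mpoly set)"
  shows "A = B"
proof -
  have var: "(monom (Poly_Mapping.single i 1) :: 'k mpoly) \<in> var_prime V C \<longleftrightarrow> i \<in> C" if "i \<in> V" for i C
    using that single_in_exps[OF that] by (simp add: var_prime_def meets_def lookup_single when_def)
  have "i \<in> A \<longleftrightarrow> i \<in> B" for i
    using var[of i A] var[of i B] assms by (cases "i \<in> V") auto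
  then show ?thesis
    by blast
qed

lemma Max_keys_add_in_mspan:
  fixes a g :: "'k::idom mpoly"
  assumes "a \<noteq> 0" "g \<noteq> 0" "a * g \<in> mspan F"
  shows "Max (Poly_Mapping.keys a) + Max (Poly_Mapping.keys g) \<in> F"
proof -
  let ?s = "Max (Poly_Mapping.keys a)" and ?t = "Max (Poly_Mapping.keys g)"
  have "Poly_Mapping.lookup (a * g) (?s + ?t) = Poly_Mapping.lookup a ?s * Poly_Mapping.lookup g ?t"
    by (rule lookup_mult_Max) simp_all
  also have "\<dots> \<noteq> 0"
    using assms(1,2) by (simp add: in_keys_iff[symmetric])
  finally show ?thesis
    using assms(3) by (auto simp: mspan_def in_keys_iff)
qed

lemma card_keys_monom_mult_diff_less:
  assumes "g \<noteq> 0" and "s + Max (Poly_Mapping.keys g) \<in> F"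
  shows "card (Poly_Mapping.keys (monom s * (g :: 'k::comm_ring_1 mpoly)) - F) < card (Poly_Mapping.keys g)"
proof -
  let ?t = "Max (Poly_Mapping.keys g)"
  have t: "?t \<in> Poly_Mapping.keys g"
    using assms(1) by simp
  have "Poly_Mapping.keys (monom s * g) - F \<subseteq> (\<lambda>x. s + x) ` (Poly_Mapping.keys g - {?t})"
    using assms(2) by (auto simp: keys_monom_mult)
  then have "card (Poly_Mapping.keys (monom s * g) - F) \<le> card ((\<lambda>x. s + x) ` (Poly_Mapping.keys g - {?t}))"
    by (rule card_mono[rotated]) simp
  also have "\<dots> \<le> card (Poly_Mapping.keys g - {?t})"
    by (rule card_image_le) simp
  also have "\<dots> < card (Poly_Mapping.keys g)"
    using t by (rule card_Diff1_less[OF finite_keys])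
  finally show ?thesis .
qed

lemma colon_Max_keys_power:
  fixes a :: "'k::idom mpoly"
  assumes F: "exp_ideal V F" and a: "a \<in> polys V" "a \<noteq> 0"
  shows "g \<in> polys V \<Longrightarrow> a * g \<in> mspan F \<Longrightarrow> \<exists>N. monom (Max (Poly_Mapping.keys a)) ^ N * g \<in> mspan F"
proof (induction "card (Poly_Mapping.keys g - F)" arbitrary: g rule: less_induct)
  \<comment> \<open>The leading term of the part g' of g outside F, shifted by x^s, lands in F; hence x^s g'
    has fewer terms outside F than g.\<close>
  case less
  let ?s = "Max (Poly_Mapping.keys a)"
  define g' where "g' = drop_terms F g"
  have gg': "g - g' \<in> mspan F"
    unfolding g'_def by (rule diff_drop_terms_in_mspan)
  have "?s \<in> Poly_Mapping.keys a"
    using a(2) by simp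
  then have s: "monom ?s \<in> polys V"
    using a(1) by (auto simp: polys_eq_mspan mspan_def)
  show ?case
  proof (cases "g' = 0")
    case True
    then show ?thesis
      using gg' by (intro exI[of _ 0]) simp
  next
    case False
    have "a * g' = a * g - a * (g - g')"
      by (simp add: algebra_simps)
    also have "\<dots> \<in> mspan F"
      using less.prems(2) exp_ideal_mult[OF F a(1) gg'] by (rule mspan_diff)
    finally have ag': "a * g' \<in> mspan F" .
    define h where "h = monom ?s * g'"
    have "h \<in> polys V"
      using less.prems(1) s unfolding h_def g'_def
      by (intro polys_mult) (auto simp: polys_def keys_drop_terms)
    moreover have "a * h \<in> mspan F"
      using exp_ideal_mult[OF F s ag'] by (simp add: h_def ac_simps)
    moreover have "card (Poly_Mapping.keys h - F) < card (Poly_Mapping.keys g - F)"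
      using card_keys_monom_mult_diff_less[OF False Max_keys_add_in_mspan[OF a(2) False ag']]
      by (simp add: h_def g'_def keys_drop_terms)
    ultimately obtain N where N: "monom ?s ^ N * h \<in> mspan F"
      using less.hyps by blast
    have "monom ?s ^ Suc N * g = monom ?s ^ N * h + monom ?s ^ Suc N * (g - g')"
      by (simp add: h_def algebra_simps)
    also have "\<dots> \<in> mspan F"
      using N exp_ideal_mult[OF F polys_power[OF s] gg'] by (rule mspan_add)
    finally show ?thesis ..
  qed
qed

lemma prime_colon_monom_in:
  fixes P :: "'k::idom mpoly set"
  assumes F: "exp_ideal V F" and P: "prime_ideal (polys V) P"
    and f: "f \<in> polys V" and Pf: "P = {a \<in> polys V. a * f \<in> mspan F}"
  shows "a \<in> P \<Longrightarrow> s \<in> Poly_Mapping.keys a \<Longrightarrow> monom s \<in> P"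
proof (induction "card (Poly_Mapping.keys a)" arbitrary: a rule: less_induct)
  case less
  let ?s = "Max (Poly_Mapping.keys a)"
  have P_ideal: "is_ideal (polys V) P"
    using P by (simp add: prime_ideal_def)
  have a: "a \<in> polys V" "a * f \<in> mspan F" "a \<noteq> 0"
    using less.prems Pf by auto
  have s: "?s \<in> Poly_Mapping.keys a"
    using a(3) by simp
  then have ms: "monom ?s \<in> polys V"
    using a(1) by (auto simp: polys_eq_mspan mspan_def)
  obtain N where "monom ?s ^ N * f \<in> mspan F"
    using colon_Max_keys_power[OF F a(1,3) f a(2)] by blast
  then have "monom ?s ^ N \<in> P"
    using Pf polys_power[OF ms] by blast
  then have sP: "monom ?s \<in> P"
    using prime_ideal_power[OF P ms] by blast
  show ?case
  proof (cases "s = ?s")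
    case False
    define a' where "a' = a - Poly_Mapping.single 0 (Poly_Mapping.lookup a ?s) * monom ?s"
    have "a' \<in> P"
      unfolding a'_def using less.prems(1) sP
      by (intro is_ideal_diff[OF P_ideal] is_ideal_mult[OF P_ideal]) auto
    moreover have keys_a': "Poly_Mapping.keys a' = Poly_Mapping.keys a - {?s}"
      by (auto simp: a'_def single_0_mult_monom in_keys_iff lookup_minus lookup_single when_def
          split: if_splits)
    moreover have "card (Poly_Mapping.keys a') < card (Poly_Mapping.keys a)"
      unfolding keys_a' using s by (rule card_Diff1_less[OF finite_keys])
    ultimately show ?thesis
      using less.hyps less.prems(2) False by blast
  qed (use sP in simp)
qed

lemma prime_monom_meets:
  fixes P :: "'k::comm_ring_1 mpoly set"
  assumes V: "finite V" and P: "prime_ideal (polys V) P"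
  shows "s \<in> exps V \<Longrightarrow> monom s \<in> P \<Longrightarrow> s \<in> meets {i \<in> V. monom (Poly_Mapping.single i 1) \<in> P}"
proof (induction "sum (Poly_Mapping.lookup s) V" arbitrary: s rule: less_induct)
  case less
  have "s \<noteq> 0"
    using less.prems(2) prime_ideal_one_notin[OF P one_in_polys] by (auto simp: monom_0)
  then obtain i where i: "i \<in> Poly_Mapping.keys s"
    by fastforce
  then have iV: "i \<in> V" and si: "0 < Poly_Mapping.lookup s i"
    using less.prems(1) by (auto simp: exps_def in_keys_iff)
  define s' where "s' = s - Poly_Mapping.single i 1"
  have ss': "s = Poly_Mapping.single i 1 + s'"
    unfolding s'_def using si by (rule single_add_minus)
  have s': "s' \<in> exps V"
    unfolding s'_def using less.prems(1) by (rule exps_minus)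
  have "monom (Poly_Mapping.single i 1) * monom s' \<in> P"
    using less.prems(2) ss' by (simp add: monom_mult)
  then consider "monom (Poly_Mapping.single i 1) \<in> P" | "monom s' \<in> P"
    using P monom_in_polys[OF single_in_exps[OF iV]] monom_in_polys[OF s'] unfolding prime_ideal_def by blast
  then show ?case
  proof cases
    case 1
    then show ?thesis
      using iV si unfolding meets_def by blast
  next
    case 2
    have "sum (Poly_Mapping.lookup s) V = Suc (sum (Poly_Mapping.lookup s') V)"
      using V iV by (subst ss') (simp add: lookup_add sum.distrib lookup_single when_def)
    then show ?thesis
      using less.hyps[OF _ s' 2] ss' by simp
  qed
qed

lemma monomial_prime_eq_var_prime:
  fixes P :: "'k::comm_ring_1 mpoly set"
  assumes V: "finite V" and P: "prime_ideal (polys V) P"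
    and monoms: "\<And>a s. a \<in> P \<Longrightarrow> s \<in> Poly_Mapping.keys a \<Longrightarrow> monom s \<in> P"
  shows "P = var_prime V {i \<in> V. monom (Poly_Mapping.single i 1) \<in> P}"
    (is "P = var_prime V ?A")
proof
  have P_ideal: "is_ideal (polys V) P"
    using P by (simp add: prime_ideal_def)
  show "P \<subseteq> var_prime V ?A"
  proof
    fix a assume a: "a \<in> P"
    then have "Poly_Mapping.keys a \<subseteq> exps V"
      using P_ideal by (auto simp: is_ideal_def polys_eq_mspan mspan_def)
    then show "a \<in> var_prime V ?A"
      using prime_monom_meets[OF V P] monoms[OF a] by (auto simp: var_prime_def mspan_def)
  qed
  show "var_prime V ?A \<subseteq> P"
    unfolding var_prime_def
  proof (rule mspan_subset_ideal[OF P_ideal], blast, rule ballI)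
    fix t assume t: "t \<in> exps V \<inter> meets ?A"
    then obtain i where i: "i \<in> ?A" "0 < Poly_Mapping.lookup t i"
      unfolding meets_def by blast
    define t' where "t' = t - Poly_Mapping.single i 1"
    have "t = t' + Poly_Mapping.single i 1"
      unfolding t'_def using single_add_minus[OF i(2)] by (simp add: add.commute)
    moreover have "monom t' * monom (Poly_Mapping.single i 1) \<in> P"
      using t i(1) exps_minus unfolding t'_def by (intro is_ideal_mult[OF P_ideal] monom_in_polys) auto
    ultimately show "monom t \<in> P"
      by (simp add: monom_mult)
  qed
qed

lemma sum_meets: "finite T \<Longrightarrow> sum W T \<in> meets A \<longleftrightarrow> (\<exists>x\<in>T. W x \<in> meets A)"
  by (induction T rule: finite_induct) auto

lemma exp_colon_witness:
  assumes F: "exp_ideal V F" and T: "finite T" "T \<subseteq> exps V"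
    and colon: "\<And>w. w \<in> exps V \<Longrightarrow> w \<in> meets A \<longleftrightarrow> (\<forall>t\<in>T. w + t \<in> F)"
  shows "\<exists>u\<in>T. ass_witness V F A u"
proof (rule ccontr)
  assume no_witness: "\<not> ?thesis"
  have "\<exists>w. w \<in> exps V \<and> w + u \<in> F \<and> w \<notin> meets A" if u: "u \<in> T" for u
  proof -
    obtain w where "w \<in> exps V" "(w + u \<in> F) \<noteq> (w \<in> meets A)"
      using no_witness u T(2) unfolding ass_witness_def by blast
    then show ?thesis
      using colon u by blast
  qed
  then obtain W where W: "\<And>u. u \<in> T \<Longrightarrow> W u \<in> exps V \<and> W u + u \<in> F \<and> W u \<notin> meets A"
    by metis
  have "(W t + t) + sum W (T - {t}) \<in> F" if "t \<in> T" for t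
    using F W[OF that] W T(1) unfolding exp_ideal_def by (simp add: exps_sum)
  then have "\<forall>t\<in>T. sum W T + t \<in> F"
    using T(1) by (simp add: sum.remove ac_simps)
  then have "sum W T \<in> meets A"
    using colon W T(1) by (simp add: exps_sum)
  then show False
    using W T(1) by (simp add: sum_meets)
qed

lemma Ass_mspan_iff:
  fixes P :: "'k::idom mpoly set"
  assumes F: "exp_ideal V F" and V: "finite V"
  shows "P \<in> Ass (polys V) (mspan F) \<longleftrightarrow> (\<exists>A\<subseteq>V. P = var_prime V A \<and> (\<exists>u. ass_witness V F A u))"
proof
  assume "P \<in> Ass (polys V) (mspan F)"
  then obtain f where P: "prime_ideal (polys V) P" and f: "f \<in> polys V"
    and Pf: "P = {a \<in> polys V. a * f \<in> mspan F}"
    unfolding Ass_def by blast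
  define A where "A = {i \<in> V. monom (Poly_Mapping.single i 1) \<in> P}"
  have PA: "P = var_prime V A"
    unfolding A_def using V P prime_colon_monom_in[OF F P f Pf] by (rule monomial_prime_eq_var_prime)
  have "w \<in> meets A \<longleftrightarrow> (\<forall>t\<in>Poly_Mapping.keys f. w + t \<in> F)" if w: "w \<in> exps V" for w
  proof -
    have "w \<in> meets A \<longleftrightarrow> monom w \<in> P"
      using PA w by (simp add: var_prime_def)
    also have "\<dots> \<longleftrightarrow> monom w * f \<in> mspan F"
      using Pf monom_in_polys[OF w] by blast
    also have "\<dots> \<longleftrightarrow> (\<forall>t\<in>Poly_Mapping.keys f. w + t \<in> F)"
      by (auto simp: mspan_def keys_monom_mult)
    finally show ?thesis .
  qed
  moreover have "Poly_Mapping.keys f \<subseteq> exps V"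
    using f by (simp add: polys_eq_mspan mspan_def)
  ultimately have "\<exists>u. ass_witness V F A u"
    using exp_colon_witness[OF F finite_keys] by blast
  then show "\<exists>A\<subseteq>V. P = var_prime V A \<and> (\<exists>u. ass_witness V F A u)"
    using PA A_def by blast
next
  assume "\<exists>A\<subseteq>V. P = var_prime V A \<and> (\<exists>u. ass_witness V F A u)"
  then show "P \<in> Ass (polys V) (mspan F)"
    using var_prime_in_Ass by blast
qed

definition exp_copersistent :: "nat set \<Rightarrow> exponent set \<Rightarrow> bool" where
  "exp_copersistent V F \<longleftrightarrow> (\<forall>k\<ge>1. \<forall>A\<subseteq>V.
     (\<exists>u. ass_witness V (exp_pow V F (Suc k)) A u) \<longrightarrow> (\<exists>u. ass_witness V (exp_pow V F k) A u))"

lemma var_prime_image_subset_iff: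
  "var_prime V ` {A. A \<subseteq> V \<and> Q1 A} \<subseteq> (var_prime V ` {A. A \<subseteq> V \<and> Q2 A} :: 'k::comm_ring_1 mpoly set set)
    \<longleftrightarrow> (\<forall>A\<subseteq>V. Q1 A \<longrightarrow> Q2 A)"
proof
  assume sub: "var_prime V ` {A. A \<subseteq> V \<and> Q1 A} \<subseteq> (var_prime V ` {A. A \<subseteq> V \<and> Q2 A} :: 'k mpoly set set)"
  show "\<forall>A\<subseteq>V. Q1 A \<longrightarrow> Q2 A"
  proof (intro allI impI)
    fix A assume A: "A \<subseteq> V" "Q1 A"
    then have "(var_prime V A :: 'k mpoly set) \<in> var_prime V ` {A. A \<subseteq> V \<and> Q2 A}"
      using sub by blast
    then obtain B where "B \<subseteq> V" "Q2 B" "(var_prime V A :: 'k mpoly set) = var_prime V B"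
      by blast
    then show "Q2 A"
      using var_prime_inj[OF A(1)] by blast
  qed
next
  assume "\<forall>A\<subseteq>V. Q1 A \<longrightarrow> Q2 A"
  then show "var_prime V ` {A. A \<subseteq> V \<and> Q1 A} \<subseteq> (var_prime V ` {A. A \<subseteq> V \<and> Q2 A} :: 'k mpoly set set)"
    by (intro image_mono) blast
qed

lemma copersistent_mspan_iff:
  assumes F: "exp_ideal V F" and V: "finite V"
  shows "copersistent (polys V) (mspan F :: 'k::idom mpoly set) \<longleftrightarrow> exp_copersistent V F"
proof -
  have Ass_pow: "Ass (polys V) (ideal_pow (polys V) (mspan F :: 'k mpoly set) k)
      = var_prime V ` {A. A \<subseteq> V \<and> (\<exists>u. ass_witness V (exp_pow V F k) A u)}" for k
    unfolding ideal_pow_mspan[OF F]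
    by (intro set_eqI) (simp add: Ass_mspan_iff[OF exp_ideal_exp_pow[OF F] V] image_iff, blast)
  show ?thesis
    unfolding copersistent_def exp_copersistent_def by (simp only: Ass_pow var_prime_image_subset_iff)
qed

section \<open>Sums of monomial ideals in disjoint sets of variables\<close>

definition exp_order :: "nat set \<Rightarrow> exponent set \<Rightarrow> exponent \<Rightarrow> nat \<Rightarrow> bool" where
  "exp_order V F u p \<longleftrightarrow> (\<forall>i. u \<in> exp_pow V F i \<longleftrightarrow> i \<le> p)"

lemma exp_order_exists:
  assumes F: "exp_ideal V F" and u: "u \<in> exps V" and N: "u \<notin> exp_pow V F N"
  obtains p where "exp_order V F u p"
proof -
  define m where "m = (LEAST i. u \<notin> exp_pow V F i)"
  have m: "u \<notin> exp_pow V F m"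
    unfolding m_def using N by (rule LeastI)
  have below: "i < m \<Longrightarrow> u \<in> exp_pow V F i" for i
    unfolding m_def using not_less_Least by blast
  have "m \<noteq> 0"
    using m u by (metis exp_pow.simps(1))
  have "u \<in> exp_pow V F i \<longleftrightarrow> i \<le> m - 1" for i
    using below \<open>m \<noteq> 0\<close> m exp_pow_antimono[OF F, of m i] by (cases "i < m") auto
  then show ?thesis
    using that unfolding exp_order_def by blast
qed

lemma exp_order_in_pow: "exp_order V F u p \<Longrightarrow> u \<in> exp_pow V F p"
  by (simp add: exp_order_def)

lemma exp_order_in_exps: "exp_order V F u p \<Longrightarrow> u \<in> exps V"
  unfolding exp_order_def by (metis exp_pow.simps(1) le0)

lemma ass_witness_empty:
  assumes "exp_ideal V G" "ass_witness V G {} u"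
  shows "G = {}"
proof (rule ccontr)
  assume "G \<noteq> {}"
  then obtain g where g: "g \<in> G"
    by blast
  then have "g \<in> exps V" "g + u \<in> G"
    using assms unfolding exp_ideal_def ass_witness_def by blast+
  then show False
    using assms(2) unfolding ass_witness_def by simp
qed

lemma ass_witness_in_pow:
  assumes F: "exp_ideal V F" and A: "a \<in> A" "A \<subseteq> V" and u: "ass_witness V (exp_pow V F (Suc q)) A u"
  shows "u \<in> exp_pow V F q"
proof (rule exp_pow_drop_var[OF F])
  show "u \<in> exps V"
    using u by (simp add: ass_witness_def)
  show "Poly_Mapping.single a 1 + u \<in> exp_pow V F (Suc q)"
    using u single_in_exps[OF subsetD[OF A(2,1)]] single_meets[OF A(1)] unfolding ass_witness_def by blast
qed

definition pair_witness :: "nat set \<Rightarrow> exponent set \<Rightarrow> nat set \<Rightarrow> exponent \<Rightarrow>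
    nat set \<Rightarrow> exponent set \<Rightarrow> nat set \<Rightarrow> exponent \<Rightarrow> nat \<Rightarrow> bool" where
  "pair_witness V1 F1 A1 u1 V2 F2 A2 u2 k \<longleftrightarrow> (\<forall>w1\<in>exps V1. \<forall>w2\<in>exps V2.
     (\<exists>i j. i + j = k \<and> w1 + u1 \<in> exp_pow V1 F1 i \<and> w2 + u2 \<in> exp_pow V2 F2 j)
       \<longleftrightarrow> w1 \<in> meets A1 \<or> w2 \<in> meets A2)"

lemma pair_witness_swap:
  "pair_witness V1 F1 A1 u1 V2 F2 A2 u2 k \<Longrightarrow> pair_witness V2 F2 A2 u2 V1 F1 A1 u1 k"
  unfolding pair_witness_def
proof (intro ballI)
  fix w2 w1
  assume pw: "\<forall>w1\<in>exps V1. \<forall>w2\<in>exps V2.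
      (\<exists>i j. i + j = k \<and> w1 + u1 \<in> exp_pow V1 F1 i \<and> w2 + u2 \<in> exp_pow V2 F2 j)
        \<longleftrightarrow> w1 \<in> meets A1 \<or> w2 \<in> meets A2"
    and w: "w2 \<in> exps V2" "w1 \<in> exps V1"
  have "(\<exists>i j. i + j = k \<and> w2 + u2 \<in> exp_pow V2 F2 i \<and> w1 + u1 \<in> exp_pow V1 F1 j)
      \<longleftrightarrow> (\<exists>i j. i + j = k \<and> w1 + u1 \<in> exp_pow V1 F1 i \<and> w2 + u2 \<in> exp_pow V2 F2 j)"
    by (metis add.commute)
  also have "\<dots> \<longleftrightarrow> w1 \<in> meets A1 \<or> w2 \<in> meets A2"
    using pw w by blast
  finally show "(\<exists>i j. i + j = k \<and> w2 + u2 \<in> exp_pow V2 F2 i \<and> w1 + u1 \<in> exp_pow V1 F1 j)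
      \<longleftrightarrow> w2 \<in> meets A2 \<or> w1 \<in> meets A1"
    by blast
qed

lemma pair_witnessD:
  "pair_witness V1 F1 A1 u1 V2 F2 A2 u2 k \<Longrightarrow> w1 \<in> exps V1 \<Longrightarrow> w2 \<in> exps V2 \<Longrightarrow>
    (\<exists>i j. i + j = k \<and> w1 + u1 \<in> exp_pow V1 F1 i \<and> w2 + u2 \<in> exp_pow V2 F2 j)
      \<longleftrightarrow> w1 \<in> meets A1 \<or> w2 \<in> meets A2"
  unfolding pair_witness_def by blast

lemma meets_exp_restrict:
  assumes "A \<subseteq> V1 \<union> V2"
  shows "t \<in> meets A \<longleftrightarrow> exp_restrict V1 t \<in> meets (A \<inter> V1) \<or> exp_restrict V2 t \<in> meets (A \<inter> V2)"
  using assms unfolding meets_def by (auto simp: lookup_exp_restrict)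

lemma ass_witness_add_iff_pair_witness:
  assumes V: "V = V1 \<union> V2" "V1 \<inter> V2 = {}" and F1: "exp_ideal V1 F1" and F2: "exp_ideal V2 F2"
    and A: "A \<subseteq> V" and u1: "u1 \<in> exps V1" and u2: "u2 \<in> exps V2"
  shows "ass_witness V (exp_pow V (exp_ideal_gen V (F1 \<union> F2)) k) A (u1 + u2) \<longleftrightarrow>
    pair_witness V1 F1 (A \<inter> V1) u1 V2 F2 (A \<inter> V2) u2 k"
proof -
  have exps: "exps V1 \<subseteq> exps V" "exps V2 \<subseteq> exps V"
    using V(1) by (simp_all add: exps_mono)
  have restrict: "exp_restrict V1 (w1 + w2) = w1" "exp_restrict V2 (w1 + w2) = w2"
    if "w1 \<in> exps V1" "w2 \<in> exps V2" for w1 w2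
    using that V(2) exp_restrict_disjoint[of w1 V1 V2] exp_restrict_disjoint[of w2 V2 V1]
    by (auto simp: exp_restrict_add exp_restrict_id Int_commute)
  have u: "u1 + u2 \<in> exps V"
    using exps u1 u2 by (blast intro: exps_add)
  have mem: "w + (u1 + u2) \<in> exp_pow V (exp_ideal_gen V (F1 \<union> F2)) k \<longleftrightarrow>
      (\<exists>i j. i + j = k \<and> exp_restrict V1 w + u1 \<in> exp_pow V1 F1 i \<and> exp_restrict V2 w + u2 \<in> exp_pow V2 F2 j)"
    if w: "w \<in> exps V" for w
    using exp_pow_gen_Un_iff[OF V F1 F2 exps_add[OF w u]] restrict[OF u1 u2]
    by (simp add: exp_restrict_add)
  have meets: "w \<in> meets A \<longleftrightarrow> exp_restrict V1 w \<in> meets (A \<inter> V1) \<or> exp_restrict V2 w \<in> meets (A \<inter> V2)" for w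
    using A V(1) by (intro meets_exp_restrict) blast
  show ?thesis
  proof
    assume aw: "ass_witness V (exp_pow V (exp_ideal_gen V (F1 \<union> F2)) k) A (u1 + u2)"
    show "pair_witness V1 F1 (A \<inter> V1) u1 V2 F2 (A \<inter> V2) u2 k"
      unfolding pair_witness_def
    proof (intro ballI)
      fix w1 w2 assume w: "w1 \<in> exps V1" "w2 \<in> exps V2"
      then have w12: "w1 + w2 \<in> exps V"
        using exps by (blast intro: exps_add)
      then have "w1 + w2 + (u1 + u2) \<in> exp_pow V (exp_ideal_gen V (F1 \<union> F2)) k \<longleftrightarrow> w1 + w2 \<in> meets A"
        using aw unfolding ass_witness_def by blast
      then show "(\<exists>i j. i + j = k \<and> w1 + u1 \<in> exp_pow V1 F1 i \<and> w2 + u2 \<in> exp_pow V2 F2 j)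
          \<longleftrightarrow> w1 \<in> meets (A \<inter> V1) \<or> w2 \<in> meets (A \<inter> V2)"
        using mem[OF w12] meets[of "w1 + w2"] restrict[OF w] by simp
    qed
  next
    assume pw: "pair_witness V1 F1 (A \<inter> V1) u1 V2 F2 (A \<inter> V2) u2 k"
    show "ass_witness V (exp_pow V (exp_ideal_gen V (F1 \<union> F2)) k) A (u1 + u2)"
      unfolding ass_witness_def
      using u mem meets pair_witnessD[OF pw exp_restrict_in_exps exp_restrict_in_exps] by simp
  qed
qed

lemma pair_witness_no_primes:
  assumes F1: "exp_ideal V1 F1" and F2: "exp_ideal V2 F2"
    and pw: "pair_witness V1 F1 {} u1 V2 F2 {} u2 (Suc k)" and k: "1 \<le> k"
  shows "pair_witness V1 F1 {} u1 V2 F2 {} u2 k"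
  unfolding pair_witness_def
proof (intro ballI)
  fix w1 w2 assume w1: "w1 \<in> exps V1" and w2: "w2 \<in> exps V2"
  have False if ij: "i + j = k" "w1 + u1 \<in> exp_pow V1 F1 i" "w2 + u2 \<in> exp_pow V2 F2 j" for i j
  proof -
    consider g where "g \<in> F1" | g where "g \<in> F2" | "F1 = {}" "F2 = {}"
      by blast
    then show False
    proof cases
      case (1 g)
      then have "(w1 + g) + u1 \<in> exp_pow V1 F1 (Suc i)" and wg: "w1 + g \<in> exps V1"
        using exp_pow_SucI[OF ij(2)] F1 w1 by (auto simp: ac_simps exp_ideal_def intro: exps_add)
      then have "\<exists>i' j'. i' + j' = Suc k \<and> (w1 + g) + u1 \<in> exp_pow V1 F1 i' \<and> w2 + u2 \<in> exp_pow V2 F2 j'"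
        using ij(1,3) by (intro exI[of _ "Suc i"] exI[of _ j]) auto
      then show False
        using pair_witnessD[OF pw wg w2] by simp
    next
      case (2 g)
      then have "(w2 + g) + u2 \<in> exp_pow V2 F2 (Suc j)" and wg: "w2 + g \<in> exps V2"
        using exp_pow_SucI[OF ij(3)] F2 w2 by (auto simp: ac_simps exp_ideal_def intro: exps_add)
      then have "\<exists>i' j'. i' + j' = Suc k \<and> w1 + u1 \<in> exp_pow V1 F1 i' \<and> (w2 + g) + u2 \<in> exp_pow V2 F2 j'"
        using ij(1,2) by (intro exI[of _ i] exI[of _ "Suc j"]) auto
      then show False
        using pair_witnessD[OF pw w1 wg] by simp
    next
      case 3
      have "i = 0" "j = 0"
        using ij(2,3) exp_pow_empty unfolding 3 by blast+
      then show False
        using ij(1) k by simp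
    qed
  qed
  then show "(\<exists>i j. i + j = k \<and> w1 + u1 \<in> exp_pow V1 F1 i \<and> w2 + u2 \<in> exp_pow V2 F2 j)
      \<longleftrightarrow> w1 \<in> meets {} \<or> w2 \<in> meets {}"
    by auto
qed

lemma pair_witness_orders:
  assumes F1: "exp_ideal V1 F1" and F2: "exp_ideal V2 F2"
    and pw: "pair_witness V1 F1 A1 u1 V2 F2 A2 u2 (Suc k)" and u1: "u1 \<in> exps V1" and u2: "u2 \<in> exps V2"
  obtains p q where "exp_order V1 F1 u1 p" "exp_order V2 F2 u2 q" "p + q \<le> k"
proof -
  have not_both: "\<not> (u1 \<in> exp_pow V1 F1 i \<and> u2 \<in> exp_pow V2 F2 j)" if "i + j = Suc k" for i j
    using pair_witnessD[OF pw exps_0 exps_0] that by auto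
  have "u1 \<notin> exp_pow V1 F1 (Suc k)"
    using not_both[of "Suc k" 0] u2 by (simp del: exp_pow.simps(2))
  then obtain p where p: "exp_order V1 F1 u1 p"
    by (rule exp_order_exists[OF F1 u1])
  have "u2 \<notin> exp_pow V2 F2 (Suc k)"
    using not_both[of 0 "Suc k"] u1 by (simp del: exp_pow.simps(2))
  then obtain q where q: "exp_order V2 F2 u2 q"
    by (rule exp_order_exists[OF F2 u2])
  have "p + q \<le> k"
  proof (rule ccontr)
    assume "\<not> p + q \<le> k"
    then have "u1 \<in> exp_pow V1 F1 (min p (Suc k)) \<and> u2 \<in> exp_pow V2 F2 (Suc k - min p (Suc k))"
      using p q by (auto simp: exp_order_def)
    then show False
      using not_both by simp
  qed
  then show ?thesis
    using that p q by blast
qed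

lemma pair_witness_orders_sum:
  assumes F2: "exp_ideal V2 F2" and pw: "pair_witness V1 F1 A1 u1 V2 F2 A2 u2 (Suc k)"
    and p: "exp_order V1 F1 u1 p" and q: "exp_order V2 F2 u2 q" and "p \<le> k"
    and b: "b \<in> A2" "A2 \<subseteq> V2"
  shows "k \<le> p + q"
proof -
  have u2: "u2 \<in> exps V2"
    using q by (rule exp_order_in_exps)
  obtain i j where ij: "i + j = Suc k" "u1 \<in> exp_pow V1 F1 i" "Poly_Mapping.single b 1 + u2 \<in> exp_pow V2 F2 j"
    using pair_witnessD[OF pw exps_0 single_in_exps[OF subsetD[OF b(2,1)]]] single_meets[OF b(1)] by auto
  have "i \<le> p"
    using ij(2) p by (simp add: exp_order_def)
  then obtain j' where j': "j = Suc j'"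
    using ij(1) \<open>p \<le> k\<close> by (cases j) auto
  then have "j' \<le> q"
    using exp_pow_drop_var[OF F2 u2] ij(3) q by (simp add: exp_order_def)
  then show ?thesis
    using ij(1) j' \<open>i \<le> p\<close> by simp
qed

lemma ass_witness_of_pair_witness:
  assumes F1: "exp_ideal V1 F1" and pw: "pair_witness V1 F1 A1 u1 V2 F2 A2 u2 (Suc k)"
    and u1: "u1 \<in> exps V1" and q: "exp_order V2 F2 u2 q" and pq: "p + q = k"
  shows "ass_witness V1 (exp_pow V1 F1 (Suc p)) A1 u1"
  unfolding ass_witness_def
proof (intro conjI ballI u1)
  fix w1 assume w1: "w1 \<in> exps V1"
  have "w1 + u1 \<in> exp_pow V1 F1 (Suc p) \<longleftrightarrow>
      (\<exists>i j. i + j = Suc k \<and> w1 + u1 \<in> exp_pow V1 F1 i \<and> u2 \<in> exp_pow V2 F2 j)"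
  proof
    assume "w1 + u1 \<in> exp_pow V1 F1 (Suc p)"
    then show "\<exists>i j. i + j = Suc k \<and> w1 + u1 \<in> exp_pow V1 F1 i \<and> u2 \<in> exp_pow V2 F2 j"
      using q pq by (intro exI[of _ "Suc p"] exI[of _ q]) (simp add: exp_order_def)
  next
    assume "\<exists>i j. i + j = Suc k \<and> w1 + u1 \<in> exp_pow V1 F1 i \<and> u2 \<in> exp_pow V2 F2 j"
    then obtain i j where "i + j = Suc k" "w1 + u1 \<in> exp_pow V1 F1 i" "j \<le> q"
      using q by (auto simp: exp_order_def)
    then show "w1 + u1 \<in> exp_pow V1 F1 (Suc p)"
      using exp_pow_antimono[OF F1, of "Suc p" i] pq by auto
  qed
  then show "w1 + u1 \<in> exp_pow V1 F1 (Suc p) \<longleftrightarrow> w1 \<in> meets A1"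
    using pair_witnessD[OF pw w1 exps_0] by simp
qed

lemma pair_witness_combine:
  assumes F1: "exp_ideal V1 F1" and F2: "exp_ideal V2 F2"
    and aw1: "ass_witness V1 (exp_pow V1 F1 p) A1 u1" and u1: "u1 \<in> exp_pow V1 F1 (p - 1)"
    and aw2: "ass_witness V2 (exp_pow V2 F2 (Suc q)) A2 u2" and u2: "u2 \<in> exp_pow V2 F2 q"
    and pq: "p + q = k" and p: "1 \<le> p"
  shows "pair_witness V1 F1 A1 u1 V2 F2 A2 u2 k"
  unfolding pair_witness_def
proof (intro ballI iffI)
  fix w1 w2 assume w1: "w1 \<in> exps V1" and w2: "w2 \<in> exps V2"
  {
    assume "\<exists>i j. i + j = k \<and> w1 + u1 \<in> exp_pow V1 F1 i \<and> w2 + u2 \<in> exp_pow V2 F2 j"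
    then obtain i j where ij: "i + j = k" "w1 + u1 \<in> exp_pow V1 F1 i" "w2 + u2 \<in> exp_pow V2 F2 j"
      by blast
    show "w1 \<in> meets A1 \<or> w2 \<in> meets A2"
    proof (cases "p \<le> i")
      case True
      then show ?thesis
        using exp_pow_antimono[OF F1 True] ij(2) aw1 w1 by (auto simp: ass_witness_def)
    next
      case False
      then have "Suc q \<le> j"
        using ij(1) pq by simp
      from exp_pow_antimono[OF F2 this] show ?thesis
        using ij(3) aw2 w2 by (auto simp: ass_witness_def)
    qed
  next
    assume "w1 \<in> meets A1 \<or> w2 \<in> meets A2"
    then show "\<exists>i j. i + j = k \<and> w1 + u1 \<in> exp_pow V1 F1 i \<and> w2 + u2 \<in> exp_pow V2 F2 j"
    proof
      assume "w1 \<in> meets A1"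
      then have "w1 + u1 \<in> exp_pow V1 F1 p"
        using aw1 w1 unfolding ass_witness_def by blast
      moreover have "w2 + u2 \<in> exp_pow V2 F2 q"
        using exp_pow_add_exps[OF F2 u2 w2] by (simp add: add.commute)
      ultimately show ?thesis
        using pq by blast
    next
      assume "w2 \<in> meets A2"
      then have "w2 + u2 \<in> exp_pow V2 F2 (Suc q)"
        using aw2 w2 unfolding ass_witness_def by blast
      moreover have "w1 + u1 \<in> exp_pow V1 F1 (p - 1)"
        using exp_pow_add_exps[OF F1 u1 w1] by (simp add: add.commute)
      moreover have "(p - 1) + Suc q = k"
        using pq p by simp
      ultimately show ?thesis
        by blast
    qed
  }
qed

lemma pair_witness_step:
  assumes F1: "exp_ideal V1 F1" and F2: "exp_ideal V2 F2" and A1: "A1 \<subseteq> V1"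
    and cop1: "exp_copersistent V1 F1" and pw: "pair_witness V1 F1 A1 u1 V2 F2 A2 u2 (Suc k)"
    and p: "exp_order V1 F1 u1 p" and q: "exp_order V2 F2 u2 q" and pq: "p + q = k" and "1 \<le> p"
  obtains u1' where "u1' \<in> exps V1" "pair_witness V1 F1 A1 u1' V2 F2 A2 u2 k"
proof -
  have u: "u1 \<in> exp_pow V1 F1 p" "u2 \<in> exp_pow V2 F2 q" "u1 \<in> exps V1" "u2 \<in> exps V2"
    using p q by (simp_all add: exp_order_in_pow exp_order_in_exps)
  have aw1: "ass_witness V1 (exp_pow V1 F1 (Suc p)) A1 u1"
    using ass_witness_of_pair_witness[OF F1 pw u(3) q pq] .
  have aw2: "ass_witness V2 (exp_pow V2 F2 (Suc q)) A2 u2"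
    using ass_witness_of_pair_witness[OF F2 pair_witness_swap[OF pw] u(4) p] pq by simp
  obtain a where a: "a \<in> A1"
  proof (cases "A1 = {}")
    case True
    obtain p' where "p = Suc p'"
      using \<open>1 \<le> p\<close> by (cases p) auto
    then have "F1 \<noteq> {}"
      using u(1) by auto
    then show ?thesis
      using ass_witness_empty[OF exp_ideal_exp_pow[OF F1]] aw1 exp_pow_nonempty True by blast
  qed blast
  obtain u' where u': "ass_witness V1 (exp_pow V1 F1 p) A1 u'"
    using cop1 aw1 A1 \<open>1 \<le> p\<close> unfolding exp_copersistent_def by blast
  have "u' \<in> exp_pow V1 F1 (p - 1)"
    using ass_witness_in_pow[OF F1 a A1] u' \<open>1 \<le> p\<close> by (simp del: exp_pow.simps(2))
  then have "pair_witness V1 F1 A1 u' V2 F2 A2 u2 k"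
    using pair_witness_combine[OF F1 F2 u' _ aw2 u(2) pq \<open>1 \<le> p\<close>] by blast
  moreover have "u' \<in> exps V1"
    using u' by (simp add: ass_witness_def)
  ultimately show ?thesis
    using that by blast
qed

lemma pair_witness_orders_eq:
  assumes F1: "exp_ideal V1 F1" and F2: "exp_ideal V2 F2" and A1: "A1 \<subseteq> V1" and A2: "A2 \<subseteq> V2"
    and u1: "u1 \<in> exps V1" and u2: "u2 \<in> exps V2"
    and pw: "pair_witness V1 F1 A1 u1 V2 F2 A2 u2 (Suc k)" and A: "A1 \<noteq> {} \<or> A2 \<noteq> {}"
  obtains p q where "exp_order V1 F1 u1 p" "exp_order V2 F2 u2 q" "p + q = k"
proof -
  obtain p q where p: "exp_order V1 F1 u1 p" and q: "exp_order V2 F2 u2 q" and "p + q \<le> k"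
    using pair_witness_orders[OF F1 F2 pw u1 u2] by blast
  moreover have "k \<le> p + q"
  proof (cases "A2 = {}")
    case True
    then obtain a where "a \<in> A1"
      using A by blast
    moreover have "q \<le> k"
      using \<open>p + q \<le> k\<close> by simp
    ultimately have "k \<le> q + p"
      using pair_witness_orders_sum[OF F1 pair_witness_swap[OF pw] q p _ _ A1] by blast
    then show ?thesis
      by simp
  next
    case False
    then obtain b where "b \<in> A2"
      by blast
    moreover have "p \<le> k"
      using \<open>p + q \<le> k\<close> by simp
    ultimately show ?thesis
      using pair_witness_orders_sum[OF F2 pw p q _ _ A2] by blast
  qed
  ultimately show ?thesis
    using that by simp
qed

lemma pair_witness_Suc_imp:
  assumes F1: "exp_ideal V1 F1" and F2: "exp_ideal V2 F2" and A1: "A1 \<subseteq> V1" and A2: "A2 \<subseteq> V2"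
    and cop1: "exp_copersistent V1 F1" and cop2: "exp_copersistent V2 F2"
    and u1: "u1 \<in> exps V1" and u2: "u2 \<in> exps V2"
    and pw: "pair_witness V1 F1 A1 u1 V2 F2 A2 u2 (Suc k)" and k: "1 \<le> k"
  obtains u1' u2' where "u1' \<in> exps V1" "u2' \<in> exps V2" "pair_witness V1 F1 A1 u1' V2 F2 A2 u2' k"
proof (cases "A1 = {} \<and> A2 = {}")
  case True
  then show ?thesis
    using that pair_witness_no_primes[OF F1 F2 _ k] pw u1 u2 by blast
next
  case False
  then obtain p q where p: "exp_order V1 F1 u1 p" and q: "exp_order V2 F2 u2 q" and pq: "p + q = k"
    using pair_witness_orders_eq[OF F1 F2 A1 A2 u1 u2 pw] by blast
  show ?thesis
  proof (cases "1 \<le> p")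
    case True
    then show ?thesis
      using pair_witness_step[OF F1 F2 A1 cop1 pw p q pq] u2 that by blast
  next
    case False
    then have "1 \<le> q" "q + p = k"
      using pq k by simp_all
    then obtain u2' where "u2' \<in> exps V2" "pair_witness V2 F2 A2 u2' V1 F1 A1 u1 k"
      using pair_witness_step[OF F2 F1 A2 cop2 pair_witness_swap[OF pw] q p] by blast
    then show ?thesis
      using pair_witness_swap u1 that by blast
  qed
qed

lemma exp_copersistent_gen_Un:
  assumes V: "V = V1 \<union> V2" "V1 \<inter> V2 = {}" and F1: "exp_ideal V1 F1" and F2: "exp_ideal V2 F2"
    and cop1: "exp_copersistent V1 F1" and cop2: "exp_copersistent V2 F2"
  shows "exp_copersistent V (exp_ideal_gen V (F1 \<union> F2))"
  unfolding exp_copersistent_def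
proof (intro allI impI)
  fix k :: nat and A assume k: "1 \<le> k" and A: "A \<subseteq> V"
  assume "\<exists>u. ass_witness V (exp_pow V (exp_ideal_gen V (F1 \<union> F2)) (Suc k)) A u"
  then obtain u where u: "ass_witness V (exp_pow V (exp_ideal_gen V (F1 \<union> F2)) (Suc k)) A u"
    by blast
  have split: "exp_restrict V1 u + exp_restrict V2 u = u"
    using u V exp_restrict_split by (auto simp: ass_witness_def)
  from ass_witness_add_iff_pair_witness[OF V F1 F2 A exp_restrict_in_exps exp_restrict_in_exps,
      of "Suc k" u u] u
  have "pair_witness V1 F1 (A \<inter> V1) (exp_restrict V1 u) V2 F2 (A \<inter> V2) (exp_restrict V2 u) (Suc k)"
    by (simp only: split)
  then obtain u1 u2 where "u1 \<in> exps V1" "u2 \<in> exps V2"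
      "pair_witness V1 F1 (A \<inter> V1) u1 V2 F2 (A \<inter> V2) u2 k"
    using pair_witness_Suc_imp[OF F1 F2 _ _ cop1 cop2 exp_restrict_in_exps exp_restrict_in_exps _ k]
    by blast
  then show "\<exists>u. ass_witness V (exp_pow V (exp_ideal_gen V (F1 \<union> F2)) k) A u"
    using ass_witness_add_iff_pair_witness[OF V F1 F2 A] by blast
qed

theorem proposition3p3:
  fixes I I1 I2 :: "'k::field mpoly set" and m n :: nat
  assumes "1 \<le> m" and "m \<le> n"
    and "monomial_ideal {1..m} I1"
    and "monomial_ideal {m+1..n} I2"
    and "I = ideal_gen (polys {1..n}) (I1 \<union> I2)"
    and "copersistent (polys {1..m}) I1"
    and "copersistent (polys {m+1..n}) I2"
  shows "copersistent (polys {1..n}) I"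
proof -
  have V: "{1..n} = {1..m} \<union> {m+1..n}" "{1..m} \<inter> {m+1..n} = {}"
    using assms(2) by auto
  obtain F1 where F1: "exp_ideal {1..m} F1" and I1: "I1 = mspan F1"
    using monomial_ideal_eq_mspan[OF assms(3)] by blast
  obtain F2 where F2: "exp_ideal {m+1..n} F2" and I2: "I2 = mspan F2"
    using monomial_ideal_eq_mspan[OF assms(4)] by blast
  let ?F = "exp_ideal_gen {1..n} (F1 \<union> F2)"
  have I: "I = mspan ?F"
    unfolding assms(5) I1 I2 using F1 F2 V(1) by (intro ideal_gen_mspan_Un) auto
  have F: "exp_ideal {1..n} ?F"
    using F1 F2 V(1) by (intro exp_ideal_gen_Un) auto
  have "exp_copersistent {1..m} F1" "exp_copersistent {m+1..n} F2"
    using assms(6,7) copersistent_mspan_iff[OF F1] copersistent_mspan_iff[OF F2] I1 I2 by auto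
  then have "exp_copersistent {1..n} ?F"
    by (rule exp_copersistent_gen_Un[OF V F1 F2])
  then show ?thesis
    unfolding I using copersistent_mspan_iff[OF F] by simp
qed

end
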